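(* Let $\lambda$ be a partition with $d$ distinct part sizes and $\lambda'$ its conjugate. For $r,s\in\{0,\dots,d\}$, \[ p_{r,s}[\lambda](t,q)=p^{\rm col}_{d+1-r,\,d-s}[\lambda'](q,t),\qquad \overline{p}_{r,s}[\lambda](t,q)=\overline{p}^{\rm col}_{d+1-r,\,d-s}[\lambda'](q,t), \] where the first subscript is read modulo $d+1$ (so $p^{\rm col}_{d+1,s}[\lambda']=p^{\rm col}_{0,s}[\lambda']$), and $f(t,q)$ denotes $f$ with $q$ and $t$ interchanged.
   Context: Partitions are Young diagrams in French convention (cells $(x,y)\in\mathbb{Z}_{>0}^2$, $x\le\lambda_y$), $\lambda'$ the conjugate; for $c=(x,y)\in\lambda$, $a_\lambda(c)=\lambda_y-x$, $\ell_\lambda(c)=\lambda'_x-y$; $n(\kappa)=\sum_{c\in\kappa}\ell_\kappa(c)$, $n'(\kappa)=\sum_{c\in\kappa}a_\kappa(c)$, $n(\rho/\kappa)=n(\rho)-n(\kappa)$, $n'(\rho/\kappa)=n'(\rho)-n'(\kappa)$. For $\kappa\subseteq\rho$, $\mathcal{R}_{\rho/\kappa}$ (resp. $\mathcal{C}_{\rho/\kappa}$): cells of $\kappa$ in a row (resp. column) containing a cell of $\rho/\kappa$. $[i,j]=1-q^it^j$. For $\kappa\lessdot\rho$ (one-cell difference): $\alpha_{\rho/\kappa}=\prod_{c\in\mathcal{R}_{\rho/\kappa}}\frac{[a_\kappa(c),\ell_\kappa(c)+1]}{[a_\rho(c),\ell_\rho(c)+1]}\prod_{c\in\mathcal{C}_{\rho/\kappa}}\frac{[a_\kappa(c)+1,\ell_\kappa(c)]}{[a_\rho(c)+1,\ell_\rho(c)]}$,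 $\overline{\alpha}_{\rho/\kappa}=\prod_{c\in\mathcal{R}_{\rho/\kappa}}\frac{[a_\kappa(c)+1,\ell_\kappa(c)]}{[a_\rho(c)+1,\ell_\rho(c)]}\prod_{c\in\mathcal{C}_{\rho/\kappa}}\frac{[a_\kappa(c),\ell_\kappa(c)+1]}{[a_\rho(c),\ell_\rho(c)+1]}$, $\beta=1/\alpha$, $\overline{\beta}=1/\overline{\alpha}$. For $\mu\lessdot\lambda\lessdot\nu$, with $A=n'(\lambda/\mu)-n'(\nu/\lambda)$, $B=n(\nu/\lambda)-n(\lambda/\mu)$: $\gamma_{\nu/\lambda/\mu}=\frac{(1-q^At^B)(1-q^{A+1}t^{B-1})}{(1-q)(1-t)}$. Probabilities: $\mathcal{P}_\lambda(\lambda\rightarrow\nu)=t^{n(\nu/\lambda)}\alpha_{\nu/\lambda}$, $\overline{\mathcal{P}}_\lambda(\lambda\leftarrow\nu)=t^{n(\nu/\lambda)}\overline{\alpha}_{\nu/\lambda}$, for $\mu\lessdot\lambda$: $\mathcal{P}_\lambda(\mu\rightarrow\nu)=t^{B-1}\alpha_{\nu/\lambda}\beta_{\lambda/\mu}/\gamma_{\nu/\lambda/\mu}$, $\overline{\mathcal{P}}_\lambda(\mu\leftarrow\nu)=t^{B-1}\overline{\alpha}_{\nu/\lambda}\overline{\beta}_{\lambda/\mu}/\gamma_{\nu/\lambda/\mu}$. If $\lambda$ has distinct part sizes $u_1>\dots>u_d>0$ with $v_i$ the multiplicity of $u_i$, set $v_{1,s}=v_1+\dots+v_s$; for $0\le s\le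 d$, $\lambda^{(+s)}$ is obtained by adding a cell in row $v_{1,s}+1$; $\lambda^{(-0)}=\lambda$, and for $1\le r\le d$, $\lambda^{(-r)}$ is obtained by removing a cell from row $v_{1,r}$. $p_{r,s}[\lambda](q,t)=\mathcal{P}_\lambda(\lambda^{(-r)}\rightarrow\lambda^{(+s)})$, $\overline{p}_{r,s}[\lambda](q,t)=\overline{\mathcal{P}}_\lambda(\lambda^{(-r)}\leftarrow\lambda^{(+s)})$, and $p^{\rm col}_{r,s}[\lambda](q,t)=p_{r,s}[\lambda](q^{-1},t^{-1})$, $\overline{p}^{\rm col}_{r,s}[\lambda](q,t)=\overline{p}_{r,s}[\lambda](q^{-1},t^{-1})$. *)

theory Defs
  imports Complex_Main
begin

text \<open>Partitions are lists of positive parts in weakly decreasing order,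
  lam = [lambda_1, lambda_2, ...].  Cells are pairs (x,y) with 1 <= y,
  1 <= x <= lambda_y (French convention: x column, y row).\<close>

definition is_partition :: "nat list \<Rightarrow> bool" where
  "is_partition lam \<longleftrightarrow> sorted_wrt (\<ge>) lam \<and> 0 \<notin> set lam"

definition part :: "nat list \<Rightarrow> nat \<Rightarrow> nat" where
  "part lam y = (if 1 \<le> y \<and> y \<le> length lam then lam ! (y - 1) else 0)"

definition conj_part :: "nat list \<Rightarrow> nat list" where
  "conj_part lam = map (\<lambda>x. length (filter (\<lambda>p. x \<le> p) lam)) [1..<Suc (Max (insert 0 (set lam)))]"

definition cells :: "nat list \<Rightarrow> (nat \<times> nat) set" where
  "cells lam = {(x, y). 1 \<le> y \<and> 1 \<le> x \<and> x \<le> part lam y}"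

definition arm :: "nat list \<Rightarrow> nat \<times> nat \<Rightarrow> int" where
  "arm lam c = int (part lam (snd c)) - int (fst c)"

definition leg :: "nat list \<Rightarrow> nat \<times> nat \<Rightarrow> int" where
  "leg lam c = int (part (conj_part lam) (fst c)) - int (snd c)"

definition nn :: "nat list \<Rightarrow> int" where
  "nn lam = (\<Sum>c\<in>cells lam. leg lam c)"

definition nn' :: "nat list \<Rightarrow> int" where
  "nn' lam = (\<Sum>c\<in>cells lam. arm lam c)"

definition br :: "real \<Rightarrow> real \<Rightarrow> int \<Rightarrow> int \<Rightarrow> real" where
  "br q t i j = 1 - q powi i * t powi j"

definition Rset :: "nat list \<Rightarrow> nat list \<Rightarrow> (nat \<times> nat) set" where
  "Rset rho kappa = {(x, y) \<in> cells kappa. \<exists>x'. (x', y) \<in> cells rho - cells kappa}"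

definition Cset :: "nat list \<Rightarrow> nat list \<Rightarrow> (nat \<times> nat) set" where
  "Cset rho kappa = {(x, y) \<in> cells kappa. \<exists>y'. (x, y') \<in> cells rho - cells kappa}"

definition alpha :: "real \<Rightarrow> real \<Rightarrow> nat list \<Rightarrow> nat list \<Rightarrow> real" where
  "alpha q t rho kappa =
    (\<Prod>c\<in>Rset rho kappa. br q t (arm kappa c) (leg kappa c + 1) / br q t (arm rho c) (leg rho c + 1)) *
    (\<Prod>c\<in>Cset rho kappa. br q t (arm kappa c + 1) (leg kappa c) / br q t (arm rho c + 1) (leg rho c))"

definition alphabar :: "real \<Rightarrow> real \<Rightarrow> nat list \<Rightarrow> nat list \<Rightarrow> real" where
  "alphabar q t rho kappa =
    (\<Prod>c\<in>Rset rho kappa. br q t (arm kappa c + 1) (leg kappa c) / br q t (arm rho c + 1) (leg rho c)) *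
    (\<Prod>c\<in>Cset rho kappa. br q t (arm kappa c) (leg kappa c + 1) / br q t (arm rho c) (leg rho c + 1))"

definition beta :: "real \<Rightarrow> real \<Rightarrow> nat list \<Rightarrow> nat list \<Rightarrow> real" where
  "beta q t rho kappa = 1 / alpha q t rho kappa"

definition betabar :: "real \<Rightarrow> real \<Rightarrow> nat list \<Rightarrow> nat list \<Rightarrow> real" where
  "betabar q t rho kappa = 1 / alphabar q t rho kappa"

definition gA :: "nat list \<Rightarrow> nat list \<Rightarrow> nat list \<Rightarrow> int" where
  "gA nu lam mu = (nn' lam - nn' mu) - (nn' nu - nn' lam)"

definition gB :: "nat list \<Rightarrow> nat list \<Rightarrow> nat list \<Rightarrow> int" where
  "gB nu lam mu = (nn nu - nn lam) - (nn lam - nn mu)"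

definition gamma :: "real \<Rightarrow> real \<Rightarrow> nat list \<Rightarrow> nat list \<Rightarrow> nat list \<Rightarrow> real" where
  "gamma q t nu lam mu =
    (1 - q powi (gA nu lam mu) * t powi (gB nu lam mu)) *
    (1 - q powi (gA nu lam mu + 1) * t powi (gB nu lam mu - 1)) / ((1 - q) * (1 - t))"

text \<open>P_lambda(lambda -> nu) and P_lambda(mu -> nu) (mu < lambda), and bar versions.\<close>
definition P0 :: "real \<Rightarrow> real \<Rightarrow> nat list \<Rightarrow> nat list \<Rightarrow> real" where
  "P0 q t lam nu = t powi (nn nu - nn lam) * alpha q t nu lam"

definition P0bar :: "real \<Rightarrow> real \<Rightarrow> nat list \<Rightarrow> nat list \<Rightarrow> real" where
  "P0bar q t lam nu = t powi (nn nu - nn lam) * alphabar q t nu lam"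

definition P1 :: "real \<Rightarrow> real \<Rightarrow> nat list \<Rightarrow> nat list \<Rightarrow> nat list \<Rightarrow> real" where
  "P1 q t lam mu nu = t powi (gB nu lam mu - 1) * alpha q t nu lam * beta q t lam mu / gamma q t nu lam mu"

definition P1bar :: "real \<Rightarrow> real \<Rightarrow> nat list \<Rightarrow> nat list \<Rightarrow> nat list \<Rightarrow> real" where
  "P1bar q t lam mu nu = t powi (gB nu lam mu - 1) * alphabar q t nu lam * betabar q t lam mu / gamma q t nu lam mu"

text \<open>Distinct part sizes u_1 > ... > u_d, and v_{1,s} = v_1 + ... + v_s.\<close>
definition usizes :: "nat list \<Rightarrow> nat list" where
  "usizes lam = rev (sorted_list_of_set (set lam))"

definition ndist :: "nat list \<Rightarrow> nat" where
  "ndist lam = card (set lam)"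

definition v1 :: "nat list \<Rightarrow> nat \<Rightarrow> nat" where
  "v1 lam s = (if s = 0 then 0 else length (filter (\<lambda>p. usizes lam ! (s - 1) \<le> p) lam))"

text \<open>Adding a cell in row y, removing a cell from row y (rows are 1-based).\<close>
definition add_cell :: "nat list \<Rightarrow> nat \<Rightarrow> nat list" where
  "add_cell lam y = (if y = length lam + 1 then lam @ [1] else lam[y - 1 := lam ! (y - 1) + 1])"

definition remove_cell :: "nat list \<Rightarrow> nat \<Rightarrow> nat list" where
  "remove_cell lam y = filter (\<lambda>p. 0 < p) (lam[y - 1 := lam ! (y - 1) - 1])"

definition lam_plus :: "nat list \<Rightarrow> nat \<Rightarrow> nat list" where
  "lam_plus lam s = add_cell lam (v1 lam s + 1)"

definition lam_minus :: "nat list \<Rightarrow> nat \<Rightarrow> nat list" where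
  "lam_minus lam r = (if r = 0 then lam else remove_cell lam (v1 lam r))"

definition prs :: "nat \<Rightarrow> nat \<Rightarrow> nat list \<Rightarrow> real \<Rightarrow> real \<Rightarrow> real" where
  "prs r s lam q t =
    (if r = 0 then P0 q t lam (lam_plus lam s)
     else P1 q t lam (lam_minus lam r) (lam_plus lam s))"

definition prsbar :: "nat \<Rightarrow> nat \<Rightarrow> nat list \<Rightarrow> real \<Rightarrow> real \<Rightarrow> real" where
  "prsbar r s lam q t =
    (if r = 0 then P0bar q t lam (lam_plus lam s)
     else P1bar q t lam (lam_minus lam r) (lam_plus lam s))"

definition prs_col :: "nat \<Rightarrow> nat \<Rightarrow> nat list \<Rightarrow> real \<Rightarrow> real \<Rightarrow> real" where
  "prs_col r s lam q t = prs r s lam (inverse q) (inverse t)"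

definition prsbar_col :: "nat \<Rightarrow> nat \<Rightarrow> nat list \<Rightarrow> real \<Rightarrow> real \<Rightarrow> real" where
  "prsbar_col r s lam q t = prsbar r s lam (inverse q) (inverse t)"

end

theory Submission
  imports Defs
begin

text \<open>Transposing the diagram swaps arms with legs, the sets \<open>\<R>\<close> and \<open>\<C>\<close>, and \<open>n\<close> with \<open>n'\<close>.
  Since \<open>1 - q\<^sup>-\<^sup>i t\<^sup>-\<^sup>j = - q\<^sup>-\<^sup>i t\<^sup>-\<^sup>j (1 - q\<^sup>i t\<^sup>j)\<close>, inverting \<open>q\<close> and \<open>t\<close> turns every factor of
  \<open>\<alpha>\<^sub>\<nu>\<^sub>'\<^sub>/\<^sub>\<lambda>\<^sub>'\<close> into the matching factor of \<open>\<alpha>\<^sub>\<nu>\<^sub>/\<^sub>\<lambda>(t, q)\<close> times a monomial; for a one-cell step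
  these monomials multiply to \<open>q\<^bsup>n(\<nu>/\<lambda>)\<^esup> t\<^bsup>n'(\<nu>/\<lambda>)\<^esup>\<close>, which cancels the powers of \<open>t\<close> in the
  transition probabilities, while \<open>\<gamma>\<close> only acquires the factor \<open>q t\<close>.

  Combinatorially, the distinct parts of \<open>\<lambda>'\<close> are the \<open>v\<^sub>1\<^sub>,\<^sub>s\<close> in reverse order, so
  \<open>v'\<^sub>1\<^sub>,\<^sub>j = u\<^sub>d\<^sub>+\<^sub>1\<^sub>-\<^sub>j\<close>. Hence the cell \<open>(u\<^sub>s\<^sub>+\<^sub>1 + 1, v\<^sub>1\<^sub>,\<^sub>s + 1)\<close> added by \<open>\<lambda>\<^sup>(\<^sup>+\<^sup>s\<^sup>)\<close> becomes the cell
  added to row \<open>v'\<^sub>1\<^sub>,\<^sub>d\<^sub>-\<^sub>s + 1\<close> of \<open>\<lambda>'\<close>, and the cell \<open>(u\<^sub>r, v\<^sub>1\<^sub>,\<^sub>r)\<close> removed by \<open>\<lambda>\<^sup>(\<^sup>-\<^sup>r\<^sup>)\<close> the cell removed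
  from row \<open>v'\<^sub>1\<^sub>,\<^sub>d\<^sub>+\<^sub>1\<^sub>-\<^sub>r = u\<^sub>r\<close> of \<open>\<lambda>'\<close>.\<close>

section \<open>Conjugate partitions\<close>

lemma part_0 [simp]: "part lam 0 = 0"
  by (simp add: part_def)

lemma part_Cons: "part (a # l) y = (if y = 1 then a else part l (y - 1))"
  by (auto simp: part_def nth_Cons')

lemma part_in_set: "1 \<le> y \<Longrightarrow> y \<le> length lam \<Longrightarrow> part lam y \<in> set lam"
  by (simp add: part_def)

lemma part_eq_0: "length lam < y \<Longrightarrow> part lam y = 0"
  by (simp add: part_def)

lemma in_set_part_conv: "x \<in> set lam \<longleftrightarrow> (\<exists>y. 1 \<le> y \<and> y \<le> length lam \<and> part lam y = x)"
proof
  assume "x \<in> set lam"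
  then obtain i where "i < length lam" "lam ! i = x" by (metis in_set_conv_nth)
  then show "\<exists>y. 1 \<le> y \<and> y \<le> length lam \<and> part lam y = x"
    by (intro exI[of _ "Suc i"]) (simp add: part_def)
qed (auto simp: part_in_set)

lemma part_pos_iff: "0 \<notin> set lam \<Longrightarrow> 0 < part lam y \<longleftrightarrow> 1 \<le> y \<and> y \<le> length lam"
proof -
  assume "0 \<notin> set lam"
  then have "part lam y \<noteq> 0" if "1 \<le> y" "y \<le> length lam"
    using part_in_set[OF that] by metis
  then show ?thesis by (auto simp: part_def)
qed

lemma part_mono:
  assumes "is_partition lam" "1 \<le> y" "y \<le> y'"
  shows "part lam y' \<le> part lam y"
proof (cases "y' \<le> length lam \<and> y < y'")
  case True
  then have "y - 1 < y' - 1" "y' - 1 < length lam" using assms by auto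
  then have "lam ! (y' - 1) \<le> lam ! (y - 1)"
    using assms(1) by (metis is_partition_def sorted_wrt_nth_less)
  then show ?thesis using assms True by (simp add: part_def)
qed (use assms in \<open>auto simp: part_def\<close>)

lemma part_inject:
  assumes "0 \<notin> set a" "0 \<notin> set b" "part a = part b"
  shows "a = b"
proof -
  have length_le: "length a \<le> length b"
    if "0 \<notin> set a" "0 \<notin> set b" "part a = part b" for a b :: "nat list"
    using part_pos_iff[OF that(1), of "length a"] part_pos_iff[OF that(2), of "length a"] that(3)
    by (cases "length a = 0") auto
  have "length a = length b"
    using length_le[OF assms] length_le[OF assms(2,1) assms(3)[symmetric]] by simp
  moreover have "a ! i = b ! i" if "i < length a" for i
    using fun_cong[OF assms(3), of "Suc i"] that calculation by (simp add: part_def)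
  ultimately show ?thesis by (simp add: list_eq_iff_nth_eq)
qed

lemma is_partitionI_part:
  assumes "0 \<notin> set lam" "\<And>y. 1 \<le> y \<Longrightarrow> part lam (Suc y) \<le> part lam y"
  shows "is_partition lam"
proof -
  have "lam ! Suc i \<le> lam ! i" if "Suc i < length lam" for i
    using assms(2)[of "Suc i"] that by (simp add: part_def)
  then have "sorted_wrt (\<ge>) lam"
    by (simp add: sorted_wrt_iff_nth_Suc_transp transp_def)
  with assms(1) show ?thesis by (simp add: is_partition_def)
qed

lemma is_partition_Cons:
  "is_partition (a # l) \<longleftrightarrow> is_partition l \<and> 0 < a \<and> (\<forall>p\<in>set l. p \<le> a)"
  unfolding is_partition_def by auto

lemma nat_eqI_pos_le: "(\<And>z::nat. 1 \<le> z \<Longrightarrow> z \<le> a \<longleftrightarrow> z \<le> b) \<Longrightarrow> a = b"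
proof -
  assume "\<And>z::nat. 1 \<le> z \<Longrightarrow> z \<le> a \<longleftrightarrow> z \<le> b"
  from this[of a] this[of b] show "a = b" by (cases "a = 0"; cases "b = 0") auto
qed

definition parts_ge :: "nat list \<Rightarrow> nat \<Rightarrow> nat" where
  "parts_ge lam x = length (filter (\<lambda>p. x \<le> p) lam)"

lemma parts_ge_antimono: "x \<le> y \<Longrightarrow> parts_ge lam y \<le> parts_ge lam x"
  unfolding parts_ge_def by (induction lam) auto

lemma parts_ge_le_length: "parts_ge lam x \<le> length lam"
  by (simp add: parts_ge_def)

lemma part_conj_part: "1 \<le> x \<Longrightarrow> part (conj_part lam) x = parts_ge lam x"
proof -
  assume x: "1 \<le> x"
  let ?M = "Max (insert 0 (set lam))"
  show ?thesis
  proof (cases "x \<le> ?M")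
    case True
    have "[Suc 0..<Suc ?M] ! (x - Suc 0) = x" using True x by (subst nth_upt) auto
    then show ?thesis
      using x True by (simp add: part_def conj_part_def parts_ge_def del: upt_Suc)
  next
    case False
    have "p \<le> ?M" if "p \<in> set lam" for p using that by simp
    then have "filter (\<lambda>p. x \<le> p) lam = []"
      using False unfolding filter_empty_conv by (meson le_trans)
    then show ?thesis using False by (simp add: part_def conj_part_def parts_ge_def)
  qed
qed

text \<open>The Galois connection between a partition and its conjugate: the cell \<open>(x, z)\<close>
  lies in the diagram iff \<open>z \<le> \<lambda>'\<^sub>x\<close> iff \<open>x \<le> \<lambda>\<^sub>z\<close>.\<close>
lemma le_parts_ge_iff:
  "is_partition lam \<Longrightarrow> 1 \<le> x \<Longrightarrow> 1 \<le> z \<Longrightarrow> z \<le> parts_ge lam x \<longleftrightarrow> x \<le> part lam z"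
proof (induction lam arbitrary: z)
  case Nil
  then show ?case by (simp add: parts_ge_def part_def)
next
  case (Cons a l)
  then have l: "is_partition l" and le_a: "\<forall>p\<in>set l. p \<le> a"
    by (auto simp: is_partition_Cons)
  show ?case
  proof (cases "x \<le> a")
    case True
    then have "parts_ge (a # l) x = Suc (parts_ge l x)" by (simp add: parts_ge_def)
    show ?thesis
    proof (cases "z = 1")
      case False
      then have "1 \<le> z - 1" "z \<le> Suc (parts_ge l x) \<longleftrightarrow> z - 1 \<le> parts_ge l x"
        using Cons.prems by auto
      with Cons.IH[OF l Cons.prems(2)] False show ?thesis
        using \<open>parts_ge (a # l) x = Suc (parts_ge l x)\<close> by (simp add: part_Cons)
    qed (use True \<open>parts_ge (a # l) x = Suc (parts_ge l x)\<close> in \<open>simp add: part_Cons\<close>)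
  next
    case False
    then have "parts_ge (a # l) x = 0"
      using le_a by (auto simp: parts_ge_def filter_empty_conv)
    moreover have "part l (z - 1) \<le> a"
      using le_a part_in_set[of "z - 1" l] by (cases "1 \<le> z - 1 \<and> z - 1 \<le> length l") (auto simp: part_def)
    ultimately show ?thesis using False Cons.prems by (auto simp: part_Cons)
  qed
qed

lemma le_part_conj_part_iff:
  "is_partition lam \<Longrightarrow> 1 \<le> x \<Longrightarrow> 1 \<le> z \<Longrightarrow> z \<le> part (conj_part lam) x \<longleftrightarrow> x \<le> part lam z"
  by (simp add: part_conj_part le_parts_ge_iff)

lemma parts_ge_part_parts_ge:
  assumes lam: "is_partition lam" and "1 \<le> x" "1 \<le> parts_ge lam x"
  shows "parts_ge lam (part lam (parts_ge lam x)) = parts_ge lam x"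
proof (rule nat_eqI_pos_le)
  fix z :: nat assume z: "1 \<le> z"
  have le: "x \<le> part lam (parts_ge lam x)"
    using le_parts_ge_iff[OF lam assms(2,3)] by simp
  then have "1 \<le> part lam (parts_ge lam x)" using assms(2) by simp
  then have "z \<le> parts_ge lam (part lam (parts_ge lam x)) \<longleftrightarrow> part lam (parts_ge lam x) \<le> part lam z"
    using le_parts_ge_iff[OF lam _ z] by blast
  also have "\<dots> \<longleftrightarrow> z \<le> parts_ge lam x"
  proof
    assume "part lam (parts_ge lam x) \<le> part lam z"
    with le have "x \<le> part lam z" by simp
    then show "z \<le> parts_ge lam x" using le_parts_ge_iff[OF lam assms(2) z] by simp
  qed (rule part_mono[OF lam z])
  finally show "z \<le> parts_ge lam (part lam (parts_ge lam x)) \<longleftrightarrow> z \<le> parts_ge lam x" .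
qed

lemma is_partition_conj_part: "is_partition (conj_part lam)"
proof -
  let ?M = "Max (insert 0 (set lam))"
  have "sorted_wrt (\<ge>) (conj_part lam)"
    unfolding conj_part_def sorted_wrt_map
    by (rule sorted_wrt_mono_rel[OF _ sorted_wrt_upt])
      (auto intro: parts_ge_antimono[unfolded parts_ge_def] simp del: upt_Suc)
  moreover have "0 < parts_ge lam x" if "1 \<le> x" "x \<le> ?M" for x
  proof -
    have "?M \<in> set lam" using that Max_in[of "insert 0 (set lam)"] by auto
    then show ?thesis
      using that by (auto simp: parts_ge_def filter_empty_conv simp flip: length_greater_0_conv)
  qed
  then have "0 \<notin> set (conj_part lam)"
    unfolding conj_part_def parts_ge_def[symmetric]
    by (fastforce simp: less_Suc_eq_le simp del: Max_insert upt_Suc)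
  ultimately show ?thesis by (simp add: is_partition_def)
qed

lemma conj_part_conj_part: "is_partition lam \<Longrightarrow> conj_part (conj_part lam) = lam"
proof (rule part_inject)
  assume lam: "is_partition lam"
  show "0 \<notin> set (conj_part (conj_part lam))" "0 \<notin> set lam"
    using is_partition_conj_part lam by (auto simp: is_partition_def)
  show "part (conj_part (conj_part lam)) = part lam"
  proof
    fix y
    show "part (conj_part (conj_part lam)) y = part lam y"
    proof (cases "y = 0")
      case False
      show ?thesis
        by (rule nat_eqI_pos_le)
          (use False lam in \<open>simp add: le_part_conj_part_iff is_partition_conj_part\<close>)
    qed simp
  qed
qed

lemma cells_conj_part:
  assumes "is_partition lam"
  shows "cells (conj_part lam) = prod.swap ` cells lam"
proof -
  have "(x, y) \<in> cells (conj_part lam) \<longleftrightarrow> (y, x) \<in> cells lam" for x y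
    using le_part_conj_part_iff[OF assms, of y x] by (auto simp: cells_def)
  then show ?thesis by (auto simp: pair_in_swap_image)
qed

lemma arm_conj_part: "arm (conj_part lam) (prod.swap c) = leg lam c"
  by (simp add: arm_def leg_def)

lemma leg_conj_part: "is_partition lam \<Longrightarrow> leg (conj_part lam) (prod.swap c) = arm lam c"
  by (simp add: arm_def leg_def conj_part_conj_part)

lemma nn_conj_part: "is_partition lam \<Longrightarrow> nn (conj_part lam) = nn' lam"
  by (simp add: nn_def nn'_def cells_conj_part sum.reindex leg_conj_part del: swap_simp)

lemma nn'_conj_part: "is_partition lam \<Longrightarrow> nn' (conj_part lam) = nn lam"
  by (simp add: nn_def nn'_def cells_conj_part sum.reindex arm_conj_part del: swap_simp)

lemma Rset_conj_part:
  "is_partition rho \<Longrightarrow> is_partition kappa \<Longrightarrow>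
    Rset (conj_part rho) (conj_part kappa) = prod.swap ` Cset rho kappa"
  unfolding Rset_def Cset_def by (auto simp: cells_conj_part pair_in_swap_image)

lemma Cset_conj_part:
  "is_partition rho \<Longrightarrow> is_partition kappa \<Longrightarrow>
    Cset (conj_part rho) (conj_part kappa) = prod.swap ` Rset rho kappa"
  unfolding Rset_def Cset_def by (auto simp: cells_conj_part pair_in_swap_image)

lemma finite_cells: "finite (cells lam)"
proof (rule finite_subset)
  show "cells lam \<subseteq> {..Max (insert 0 (set lam))} \<times> {..length lam}"
  proof (rule subrelI)
    fix x y assume "(x, y) \<in> cells lam"
    then have "1 \<le> x" "x \<le> part lam y" by (auto simp: cells_def)
    then have "1 \<le> y \<and> y \<le> length lam"
      using part_eq_0[of lam y] by (cases "y = 0") (simp, linarith)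
    then show "(x, y) \<in> {..Max (insert 0 (set lam))} \<times> {..length lam}"
      using part_in_set[of y lam] \<open>x \<le> part lam y\<close> by (auto intro: le_trans)
  qed
qed simp

section \<open>Adding and removing one cell\<close>

lemma part_list_update:
  "1 \<le> y \<Longrightarrow> y \<le> length lam \<Longrightarrow> part (lam[y - 1 := v]) = (part lam)(y := v)"
  by (auto simp: part_def fun_eq_iff nth_list_update)

lemma part_add_cell:
  assumes "1 \<le> y" "y \<le> length lam + 1"
  shows "part (add_cell lam y) = (part lam)(y := Suc (part lam y))"
proof (cases "y = length lam + 1")
  case True
  then show ?thesis by (auto simp: add_cell_def part_def fun_eq_iff nth_append)
next
  case False
  with assms have "y \<le> length lam" by simp
  moreover from this have "part lam y = lam ! (y - 1)" using assms by (simp add: part_def)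
  ultimately show ?thesis using False assms part_list_update[of y lam] by (simp add: add_cell_def)
qed

lemma zero_notin_add_cell:
  assumes "0 \<notin> set lam" "1 \<le> y" "y \<le> length lam + 1"
  shows "0 \<notin> set (add_cell lam y)"
  using assms set_update_subset_insert[of lam "y - 1" "Suc (lam ! (y - 1))"]
  by (auto simp: add_cell_def)

lemma zero_notin_remove_cell: "0 \<notin> set (remove_cell lam y)"
  by (simp add: remove_cell_def)

text \<open>\<open>remove_cell\<close> filters out the zero left behind when a row of length 1 is emptied; the
  corner condition forces that row to be the last one.\<close>
lemma part_remove_cell:
  assumes "0 \<notin> set lam" and corner: "part lam (Suc y) < part lam y"
  shows "part (remove_cell lam y) = (part lam)(y := part lam y - 1)"
proof -
  have y: "1 \<le> y" "y \<le> length lam"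
    using corner part_eq_0[of lam y] by (cases "y = 0"; fastforce)+
  show ?thesis
  proof (cases "part lam y = 1")
    case True
    then have "part lam (Suc y) = 0" using corner by simp
    then have "y = length lam" using part_pos_iff[OF assms(1), of "Suc y"] y by simp
    then obtain xs a where xs: "lam = xs @ [a]" and len: "length xs = y - 1"
      using y by (metis append_butlast_last_id length_butlast list.size(3) not_one_le_zero)
    have "lam[y - 1 := lam ! (y - 1) - 1] = xs @ [0]"
      using True xs len y by (simp add: part_def list_update_append)
    moreover have "filter (\<lambda>p. 0 < p) xs = xs"
      using assms(1) xs by (auto simp: filter_id_conv intro: gr0I)
    ultimately have "remove_cell lam y = xs" by (simp add: remove_cell_def)
    then show ?thesis using True len xs y by (auto simp: part_def fun_eq_iff nth_append)
  next
    case False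
    then have "0 < lam ! (y - 1) - 1"
      using part_pos_iff[OF assms(1), of y] y by (simp add: part_def)
    then have "remove_cell lam y = lam[y - 1 := lam ! (y - 1) - 1]"
      using assms(1) unfolding remove_cell_def
      by (auto simp: filter_id_conv dest: set_update_subset_insert[THEN subsetD] intro: gr0I)
    then show ?thesis using part_list_update[OF y] y by (simp add: part_def)
  qed
qed

locale one_cell_ext =
  fixes lam nu :: "nat list" and y0 :: nat
  assumes is_partition_lam: "is_partition lam" and is_partition_nu: "is_partition nu"
    and row_pos: "1 \<le> y0"
    and part_nu: "part nu = (part lam)(y0 := Suc (part lam y0))"
begin

definition x0 :: nat where "x0 = part nu y0"

lemma x0_eq: "x0 = Suc (part lam y0)"
  by (simp add: x0_def part_nu)

lemma part_nu_eq: "part nu z = (if z = y0 then x0 else part lam z)"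
  by (simp add: part_nu x0_eq)

lemma cells_nu: "cells nu = insert (x0, y0) (cells lam)"
  using row_pos by (auto simp: cells_def part_nu_eq x0_eq split: if_splits)

lemma new_cell_notin: "(x0, y0) \<notin> cells lam"
  by (simp add: cells_def x0_eq)

lemma nu_eq_add_cell: "nu = add_cell lam y0"
proof (rule part_inject)
  have "y0 \<le> length lam + 1"
  proof (rule ccontr)
    assume "\<not> y0 \<le> length lam + 1"
    then have "1 \<le> y0 - 1" "y0 - 1 \<noteq> y0" by simp_all
    then have "part nu y0 \<le> part lam (y0 - 1)"
      using part_mono[OF is_partition_nu, of "y0 - 1" y0] by (simp add: part_nu_eq)
    with \<open>\<not> y0 \<le> length lam + 1\<close> show False by (simp add: part_nu_eq x0_eq part_eq_0)
  qed
  then show "part nu = part (add_cell lam y0)" "0 \<notin> set (add_cell lam y0)"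
    using part_add_cell[OF row_pos] zero_notin_add_cell[OF _ row_pos] is_partition_lam
    by (simp_all add: part_nu is_partition_def)
  show "0 \<notin> set nu" using is_partition_nu by (simp add: is_partition_def)
qed

lemma lam_eq_remove_cell: "lam = remove_cell nu y0"
proof (rule part_inject)
  have corner: "part nu (Suc y0) < part nu y0"
    using part_mono[OF is_partition_lam row_pos, of "Suc y0"] by (simp add: part_nu_eq x0_eq)
  show "part lam = part (remove_cell nu y0)"
    using part_remove_cell[OF _ corner] is_partition_nu
    by (simp add: part_nu x0_eq is_partition_def fun_eq_iff)
  show "0 \<notin> set lam" using is_partition_lam by (simp add: is_partition_def)
qed (rule zero_notin_remove_cell)

lemma part_conj_nu_other:
  assumes "1 \<le> x" "x \<noteq> x0"
  shows "part (conj_part nu) x = part (conj_part lam) x"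
proof (rule nat_eqI_pos_le)
  fix z :: nat assume "1 \<le> z"
  have "z \<le> part (conj_part nu) x \<longleftrightarrow> x \<le> part nu z"
    using le_part_conj_part_iff[OF is_partition_nu assms(1) \<open>1 \<le> z\<close>] .
  also have "\<dots> \<longleftrightarrow> x \<le> part lam z"
    using assms(2) by (auto simp: part_nu_eq x0_eq)
  also have "\<dots> \<longleftrightarrow> z \<le> part (conj_part lam) x"
    using le_part_conj_part_iff[OF is_partition_lam assms(1) \<open>1 \<le> z\<close>] by simp
  finally show "z \<le> part (conj_part nu) x \<longleftrightarrow> z \<le> part (conj_part lam) x" .
qed

lemma part_conj_nu_x0: "part (conj_part nu) x0 = y0"
proof (rule nat_eqI_pos_le)
  fix z :: nat assume z: "1 \<le> z"
  have "x0 \<le> part nu z \<longleftrightarrow> z \<le> y0"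
  proof
    assume "x0 \<le> part nu z"
    then show "z \<le> y0"
      using part_mono[OF is_partition_lam row_pos, of z] by (cases "z \<le> y0") (auto simp: part_nu_eq x0_eq)
  qed (use part_mono[OF is_partition_nu z, of y0] in \<open>simp add: x0_def\<close>)
  then show "z \<le> part (conj_part nu) x0 \<longleftrightarrow> z \<le> y0"
    using le_part_conj_part_iff[OF is_partition_nu _ z, of x0] by (simp add: x0_eq)
qed

lemma part_conj_lam_x0: "part (conj_part lam) x0 = y0 - 1"
proof (rule nat_eqI_pos_le)
  fix z :: nat assume z: "1 \<le> z"
  have "x0 \<le> part lam z \<longleftrightarrow> z \<le> y0 - 1"
  proof
    assume "x0 \<le> part lam z"
    show "z \<le> y0 - 1"
    proof (rule ccontr)
      assume "\<not> z \<le> y0 - 1"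
      then have "part lam z \<le> part lam y0" using part_mono[OF is_partition_lam row_pos] by simp
      with \<open>x0 \<le> part lam z\<close> show False by (simp add: x0_eq)
    qed
  next
    assume "z \<le> y0 - 1"
    then have "z \<le> y0" "z \<noteq> y0" using row_pos by simp_all
    then show "x0 \<le> part lam z"
      using part_mono[OF is_partition_nu z, of y0] by (simp add: part_nu_eq)
  qed
  then show "z \<le> part (conj_part lam) x0 \<longleftrightarrow> z \<le> y0 - 1"
    using le_part_conj_part_iff[OF is_partition_lam _ z, of x0] by (simp add: x0_eq)
qed

lemma one_cell_ext_conj_part: "one_cell_ext (conj_part lam) (conj_part nu) x0"
proof
  show "part (conj_part nu) = (part (conj_part lam))(x0 := Suc (part (conj_part lam) x0))"
  proof
    fix x
    show "part (conj_part nu) x = ((part (conj_part lam))(x0 := Suc (part (conj_part lam) x0))) x"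
      using part_conj_nu_other[of x] part_conj_nu_x0 part_conj_lam_x0 row_pos by (cases "x = 0") (auto simp: x0_eq)
  qed
qed (simp_all add: is_partition_conj_part x0_eq)

lemma conj_part_nu_eq_add_cell: "conj_part nu = add_cell (conj_part lam) x0"
  by (rule one_cell_ext.nu_eq_add_cell[OF one_cell_ext_conj_part])

lemma conj_part_lam_eq_remove_cell: "conj_part lam = remove_cell (conj_part nu) x0"
  by (rule one_cell_ext.lam_eq_remove_cell[OF one_cell_ext_conj_part])

lemma leg_nu_other: "c \<in> cells lam \<Longrightarrow> fst c \<noteq> x0 \<Longrightarrow> leg nu c = leg lam c"
  by (auto simp: leg_def cells_def part_conj_nu_other)

lemma arm_nu_other: "snd c \<noteq> y0 \<Longrightarrow> arm nu c = arm lam c"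
  by (simp add: arm_def part_nu_eq)

lemma cells_diff: "cells nu - cells lam = {(x0, y0)}"
  using new_cell_notin by (auto simp: cells_nu)

lemma Rset_eq: "Rset nu lam = {c \<in> cells lam. snd c = y0}"
  unfolding Rset_def cells_diff by auto

lemma Cset_eq: "Cset nu lam = {c \<in> cells lam. fst c = x0}"
  unfolding Cset_def cells_diff by auto

lemma nn_diff: "nn nu - nn lam = (\<Sum>c\<in>cells lam. leg nu c - leg lam c)"
  using new_cell_notin finite_cells[of lam]
  by (simp add: nn_def cells_nu leg_def part_conj_nu_x0 sum_subtractf)

lemma nn'_diff: "nn' nu - nn' lam = (\<Sum>c\<in>cells lam. arm nu c - arm lam c)"
  using new_cell_notin finite_cells[of lam]
  by (simp add: nn'_def cells_nu arm_def part_nu_eq sum_subtractf)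

end

lemma one_cell_ext_add_cell:
  assumes lam: "is_partition lam" and "1 \<le> y"
    and corner: "y = 1 \<or> part lam y < part lam (y - 1)"
  shows "one_cell_ext lam (add_cell lam y) y"
proof -
  have "y \<le> length lam + 1"
    using corner part_eq_0[of lam "y - 1"] by (cases "length lam < y - 1") auto
  then have part_add: "part (add_cell lam y) = (part lam)(y := Suc (part lam y))"
    using part_add_cell[OF \<open>1 \<le> y\<close>] by simp
  have "is_partition (add_cell lam y)"
  proof (rule is_partitionI_part)
    show "0 \<notin> set (add_cell lam y)"
      using zero_notin_add_cell[OF _ \<open>1 \<le> y\<close> \<open>y \<le> length lam + 1\<close>] lam
      by (simp add: is_partition_def)
    fix z :: nat assume "1 \<le> z"
    then show "part (add_cell lam y) (Suc z) \<le> part (add_cell lam y) z"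
      using part_mono[OF lam \<open>1 \<le> z\<close>, of "Suc z"] corner unfolding part_add by auto
  qed
  with lam \<open>1 \<le> y\<close> part_add show ?thesis by unfold_locales
qed

lemma one_cell_ext_remove_cell:
  assumes lam: "is_partition lam" and corner: "part lam (Suc y) < part lam y"
  shows "one_cell_ext (remove_cell lam y) lam y"
proof
  have "0 \<notin> set lam" using lam by (simp add: is_partition_def)
  note part_rem = part_remove_cell[OF this corner]
  show "1 \<le> y" using corner by (cases y) auto
  show "is_partition (remove_cell lam y)"
  proof (rule is_partitionI_part[OF zero_notin_remove_cell])
    fix z :: nat assume "1 \<le> z"
    then show "part (remove_cell lam y) (Suc z) \<le> part (remove_cell lam y) z"
      using part_mono[OF lam \<open>1 \<le> z\<close>, of "Suc z"] part_mono[OF lam, of "y - 1" y] corner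
      unfolding part_rem by auto
  qed
  show "part lam = (part (remove_cell lam y))(y := Suc (part (remove_cell lam y) y))"
    using corner by (auto simp: part_rem fun_eq_iff)
qed (rule lam)

section \<open>Conjugation against the inversion of \<open>q\<close> and \<open>t\<close>\<close>

lemma br_inverse_ratio:
  fixes q t :: real
  assumes "q \<noteq> 0" "t \<noteq> 0"
  shows "br (inverse q) (inverse t) i1 j1 / br (inverse q) (inverse t) i2 j2
       = br t q j1 i1 / br t q j2 i2 * (q powi (i2 - i1) * t powi (j2 - j1))"
proof -
  define a1 a2 b1 b2 where "a1 = q powi i1" "a2 = q powi i2" "b1 = t powi j1" "b2 = t powi j2"
  have nz: "a1 \<noteq> 0" "a2 \<noteq> 0" "b1 \<noteq> 0" "b2 \<noteq> 0"
    using assms by (auto simp: a1_a2_b1_b2_def)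
  have lhs: "br (inverse q) (inverse t) i1 j1 / br (inverse q) (inverse t) i2 j2
      = (1 - inverse a1 * inverse b1) / (1 - inverse a2 * inverse b2)"
    by (simp add: br_def power_int_inverse a1_a2_b1_b2_def)
  have rhs: "br t q j1 i1 / br t q j2 i2 = (1 - a1 * b1) / (1 - a2 * b2)"
    by (simp add: br_def a1_a2_b1_b2_def mult.commute)
  have monomial: "q powi (i2 - i1) * t powi (j2 - j1) = a2 / a1 * (b2 / b1)"
    using assms by (simp add: a1_a2_b1_b2_def power_int_diff)
  show ?thesis
    unfolding lhs rhs monomial using nz by (cases "1 - a2 * b2 = 0") (auto simp: field_simps)
qed

definition hook_ratio :: "real \<Rightarrow> real \<Rightarrow> nat list \<Rightarrow> nat list \<Rightarrow> int \<Rightarrow> int \<Rightarrow> nat \<times> nat \<Rightarrow> real" where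
  "hook_ratio q t rho kappa i j c =
    br q t (arm kappa c + i) (leg kappa c + j) / br q t (arm rho c + i) (leg rho c + j)"

definition shift_weight :: "real \<Rightarrow> real \<Rightarrow> nat list \<Rightarrow> nat list \<Rightarrow> nat \<times> nat \<Rightarrow> real" where
  "shift_weight q t rho kappa c = q powi (leg rho c - leg kappa c) * t powi (arm rho c - arm kappa c)"

lemma alpha_hook_ratio:
  "alpha q t rho kappa =
    (\<Prod>c\<in>Rset rho kappa. hook_ratio q t rho kappa 0 1 c) * (\<Prod>c\<in>Cset rho kappa. hook_ratio q t rho kappa 1 0 c)"
  by (simp add: alpha_def hook_ratio_def)

lemma alphabar_hook_ratio:
  "alphabar q t rho kappa =
    (\<Prod>c\<in>Rset rho kappa. hook_ratio q t rho kappa 1 0 c) * (\<Prod>c\<in>Cset rho kappa. hook_ratio q t rho kappa 0 1 c)"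
  by (simp add: alphabar_def hook_ratio_def)

lemma hook_ratio_conj_part:
  fixes q t :: real
  assumes "q \<noteq> 0" "t \<noteq> 0" "is_partition rho" "is_partition kappa"
  shows "hook_ratio (inverse q) (inverse t) (conj_part rho) (conj_part kappa) i j (prod.swap c)
       = hook_ratio t q rho kappa j i c * shift_weight q t rho kappa c"
  using br_inverse_ratio[OF assms(1,2)] assms(3,4)
  by (simp add: hook_ratio_def shift_weight_def arm_conj_part leg_conj_part del: swap_simp)

lemma alpha_conj_part_inverse:
  fixes q t :: real
  assumes "q \<noteq> 0" "t \<noteq> 0" "is_partition rho" "is_partition kappa"
  shows "alpha (inverse q) (inverse t) (conj_part rho) (conj_part kappa)
       = alpha t q rho kappa *
         ((\<Prod>c\<in>Rset rho kappa. shift_weight q t rho kappa c) * (\<Prod>c\<in>Cset rho kappa. shift_weight q t rho kappa c))"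
  using assms
  by (simp add: alpha_hook_ratio Rset_conj_part Cset_conj_part prod.reindex[OF inj_swap]
      hook_ratio_conj_part prod.distrib mult_ac del: swap_simp)

lemma alphabar_conj_part_inverse:
  fixes q t :: real
  assumes "q \<noteq> 0" "t \<noteq> 0" "is_partition rho" "is_partition kappa"
  shows "alphabar (inverse q) (inverse t) (conj_part rho) (conj_part kappa)
       = alphabar t q rho kappa *
         ((\<Prod>c\<in>Rset rho kappa. shift_weight q t rho kappa c) * (\<Prod>c\<in>Cset rho kappa. shift_weight q t rho kappa c))"
  using assms
  by (simp add: alphabar_hook_ratio Rset_conj_part Cset_conj_part prod.reindex[OF inj_swap]
      hook_ratio_conj_part prod.distrib mult_ac del: swap_simp)

lemma prod_power_int_sum:
  fixes x :: "'a :: field"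
  assumes "x \<noteq> 0"
  shows "(\<Prod>a\<in>A. x powi f a) = x powi (\<Sum>a\<in>A. f a)"
proof (cases "finite A")
  case True
  then show ?thesis by (induction A rule: finite_induct) (simp_all add: power_int_add assms)
qed simp

lemma gamma_conj_part:
  fixes q t :: real
  assumes "is_partition mu" "is_partition lam" "is_partition nu" "q \<noteq> 0" "t \<noteq> 0"
  shows "gamma (inverse q) (inverse t) (conj_part nu) (conj_part lam) (conj_part mu)
       = q * t * gamma t q nu lam mu"
proof -
  define A B where "A = gA nu lam mu" "B = gB nu lam mu"
  define a b where "a = q powi B" "b = t powi A"
  have conj: "gA (conj_part nu) (conj_part lam) (conj_part mu) = - B"
    "gB (conj_part nu) (conj_part lam) (conj_part mu) = - A"
    using assms by (simp_all add: A_B_def gA_def gB_def nn_conj_part nn'_conj_part)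
  have powers: "inverse q powi (- B) = a" "inverse t powi (- A) = b"
    "inverse q powi (- B + 1) = a / q" "inverse t powi (- A - 1) = b * t"
    "q powi (B - 1) = a / q" "t powi (A + 1) = b * t"
    using assms by (simp_all add: a_b_def power_int_add power_int_diff power_int_minus field_simps
        del: power_int_inverse)
  have "a \<noteq> 0" "b \<noteq> 0" using assms by (simp_all add: a_b_def)
  then show ?thesis
    using assms unfolding gamma_def conj A_B_def[symmetric] powers a_b_def[symmetric]
    by (simp add: field_simps)
qed

lemma P0_monomial_cancel:
  fixes q t X :: real
  assumes "t \<noteq> 0"
  shows "inverse t powi b * (X * (q powi a * t powi b)) = q powi a * X"
  using assms by (simp add: power_int_inverse field_simps)

lemma P1_monomial_cancel:
  fixes q t X Y G :: real
  assumes "q \<noteq> 0" "t \<noteq> 0"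
  shows "inverse t powi (b1 - b2 - 1) * (X * (q powi a1 * t powi b1)) * (1 / (Y * (q powi a2 * t powi b2)))
           / (q * t * G)
       = q powi (a1 - a2 - 1) * X * (1 / Y) / G"
proof -
  have "inverse t powi (b1 - b2 - 1) = t powi b2 * t / t powi b1"
    using assms by (simp add: power_int_inverse power_int_diff power_int_minus power_int_add field_simps)
  moreover have "q powi (a1 - a2 - 1) = q powi a1 / q powi a2 / q"
    using assms by (simp add: power_int_diff)
  ultimately show ?thesis
    using assms by (cases "Y = 0"; cases "G = 0") (simp_all add: field_simps)
qed

context one_cell_ext
begin

lemma prod_shift_weight:
  fixes q t :: real
  assumes "q \<noteq> 0" "t \<noteq> 0"
  shows "(\<Prod>c\<in>Rset nu lam. shift_weight q t nu lam c) * (\<Prod>c\<in>Cset nu lam. shift_weight q t nu lam c)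
       = q powi (nn nu - nn lam) * t powi (nn' nu - nn' lam)"
proof -
  have disjoint: "Rset nu lam \<inter> Cset nu lam = {}"
    using new_cell_notin by (auto simp: Rset_eq Cset_eq)
  have "(\<Prod>c\<in>Rset nu lam. shift_weight q t nu lam c) * (\<Prod>c\<in>Cset nu lam. shift_weight q t nu lam c)
      = (\<Prod>c\<in>Rset nu lam \<union> Cset nu lam. shift_weight q t nu lam c)"
    using finite_cells[of lam] disjoint
    by (intro prod.union_disjoint[symmetric]) (auto simp: Rset_eq Cset_eq)
  also have "\<dots> = (\<Prod>c\<in>cells lam. shift_weight q t nu lam c)"
    by (rule prod.mono_neutral_left[OF finite_cells])
      (auto simp: Rset_eq Cset_eq shift_weight_def leg_nu_other arm_nu_other)
  also have "\<dots> = q powi (nn nu - nn lam) * t powi (nn' nu - nn' lam)"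
    by (simp add: shift_weight_def prod.distrib prod_power_int_sum assms nn_diff nn'_diff)
  finally show ?thesis .
qed

lemma alpha_conj_part:
  fixes q t :: real
  assumes "q \<noteq> 0" "t \<noteq> 0"
  shows "alpha (inverse q) (inverse t) (conj_part nu) (conj_part lam)
       = alpha t q nu lam * (q powi (nn nu - nn lam) * t powi (nn' nu - nn' lam))"
  using alpha_conj_part_inverse[OF assms is_partition_nu is_partition_lam] prod_shift_weight[OF assms]
  by simp

lemma alphabar_conj_part:
  fixes q t :: real
  assumes "q \<noteq> 0" "t \<noteq> 0"
  shows "alphabar (inverse q) (inverse t) (conj_part nu) (conj_part lam)
       = alphabar t q nu lam * (q powi (nn nu - nn lam) * t powi (nn' nu - nn' lam))"
  using alphabar_conj_part_inverse[OF assms is_partition_nu is_partition_lam] prod_shift_weight[OF assms]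
  by simp

lemma P0_conj_part:
  fixes q t :: real
  assumes "q \<noteq> 0" "t \<noteq> 0"
  shows "P0 (inverse q) (inverse t) (conj_part lam) (conj_part nu) = P0 t q lam nu"
  unfolding P0_def nn_conj_part[OF is_partition_lam] nn_conj_part[OF is_partition_nu]
    alpha_conj_part[OF assms] P0_monomial_cancel[OF assms(2)] ..

lemma P0bar_conj_part:
  fixes q t :: real
  assumes "q \<noteq> 0" "t \<noteq> 0"
  shows "P0bar (inverse q) (inverse t) (conj_part lam) (conj_part nu) = P0bar t q lam nu"
  unfolding P0bar_def nn_conj_part[OF is_partition_lam] nn_conj_part[OF is_partition_nu]
    alphabar_conj_part[OF assms] P0_monomial_cancel[OF assms(2)] ..

end

lemma P1_conj_part:
  fixes q t :: real
  assumes mu: "one_cell_ext mu lam y1" and nu: "one_cell_ext lam nu y0" and "q \<noteq> 0" "t \<noteq> 0"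
  shows "P1 (inverse q) (inverse t) (conj_part lam) (conj_part mu) (conj_part nu) = P1 t q lam mu nu"
proof -
  have partitions: "is_partition mu" "is_partition lam" "is_partition nu"
    using mu nu one_cell_ext.is_partition_lam one_cell_ext.is_partition_nu by blast+
  show ?thesis
    unfolding P1_def beta_def gB_def nn_conj_part[OF partitions(1)] nn_conj_part[OF partitions(2)]
      nn_conj_part[OF partitions(3)]
      one_cell_ext.alpha_conj_part[OF mu assms(3,4)] one_cell_ext.alpha_conj_part[OF nu assms(3,4)]
      gamma_conj_part[OF partitions assms(3,4)] P1_monomial_cancel[OF assms(3,4)] ..
qed

lemma P1bar_conj_part:
  fixes q t :: real
  assumes mu: "one_cell_ext mu lam y1" and nu: "one_cell_ext lam nu y0" and "q \<noteq> 0" "t \<noteq> 0"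
  shows "P1bar (inverse q) (inverse t) (conj_part lam) (conj_part mu) (conj_part nu) = P1bar t q lam mu nu"
proof -
  have partitions: "is_partition mu" "is_partition lam" "is_partition nu"
    using mu nu one_cell_ext.is_partition_lam one_cell_ext.is_partition_nu by blast+
  show ?thesis
    unfolding P1bar_def betabar_def gB_def nn_conj_part[OF partitions(1)] nn_conj_part[OF partitions(2)]
      nn_conj_part[OF partitions(3)]
      one_cell_ext.alphabar_conj_part[OF mu assms(3,4)] one_cell_ext.alphabar_conj_part[OF nu assms(3,4)]
      gamma_conj_part[OF partitions assms(3,4)] P1_monomial_cancel[OF assms(3,4)] ..
qed

section \<open>Distinct part sizes\<close>

lemma set_usizes: "set (usizes lam) = set lam"
  by (simp add: usizes_def)

lemma length_usizes: "length (usizes lam) = ndist lam"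
  by (simp add: usizes_def ndist_def)

lemma sorted_usizes: "sorted_wrt (>) (usizes lam)"
  using strict_sorted_list_of_set[of "set lam"] by (simp add: usizes_def sorted_wrt_rev)

locale partition_sizes =
  fixes lam :: "nat list"
  assumes partition_lam: "is_partition lam"
begin

abbreviation d :: nat where "d \<equiv> ndist lam"

text \<open>\<open>usize s\<close> is the paper's \<open>u\<^sub>s\<close> for \<open>1 \<le> s \<le> d\<close>; the junk value \<open>usize (d + 1) = 0\<close>
  is the length of the empty row below \<open>lam\<close>, where \<open>lam\<^sup>(\<^sup>+\<^sup>d\<^sup>)\<close> adds its cell.\<close>
definition usize :: "nat \<Rightarrow> nat" where
  "usize s = (if 1 \<le> s \<and> s \<le> d then usizes lam ! (s - 1) else 0)"

lemma usize_in_set: "1 \<le> s \<Longrightarrow> s \<le> d \<Longrightarrow> usize s \<in> set lam"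
  using nth_mem[of "s - 1" "usizes lam"] by (simp add: usize_def length_usizes set_usizes)

lemma usize_pos: "1 \<le> s \<Longrightarrow> s \<le> d \<Longrightarrow> 0 < usize s"
  using usize_in_set partition_lam unfolding is_partition_def by (metis gr0I)

lemma usize_strict_antimono:
  assumes "1 \<le> s" "s < s'" "s' \<le> d + 1"
  shows "usize s' < usize s"
proof (cases "s' \<le> d")
  case True
  then show ?thesis
    using assms sorted_wrt_nth_less[OF sorted_usizes, of "s - 1" "s' - 1"]
    by (simp add: usize_def length_usizes)
next
  case False
  then show ?thesis using usize_pos[of s] assms by (simp add: usize_def)
qed

lemma usize_antimono: "1 \<le> s \<Longrightarrow> s \<le> s' \<Longrightarrow> s' \<le> d + 1 \<Longrightarrow> usize s' \<le> usize s"
  using usize_strict_antimono[of s s'] by (cases "s = s'") auto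

lemma in_set_usizeE:
  assumes "x \<in> set lam"
  obtains s where "1 \<le> s" "s \<le> d" "x = usize s"
proof -
  from assms obtain i where "i < length (usizes lam)" "usizes lam ! i = x"
    by (metis in_set_conv_nth set_usizes)
  then show ?thesis using that[of "Suc i"] by (simp add: usize_def length_usizes)
qed

lemma v1_eq_parts_ge: "1 \<le> s \<Longrightarrow> s \<le> d \<Longrightarrow> v1 lam s = parts_ge lam (usize s)"
  by (simp add: v1_def usize_def parts_ge_def)

lemma part_v1:
  assumes "1 \<le> s" "s \<le> d"
  shows "1 \<le> v1 lam s" "v1 lam s \<le> length lam" "part lam (v1 lam s) = usize s"
proof -
  obtain y where y: "1 \<le> y" "part lam y = usize s"
    using usize_in_set[OF assms] in_set_part_conv by metis
  have x: "1 \<le> usize s" using usize_pos[OF assms] by simp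
  have "y \<le> v1 lam s"
    using le_parts_ge_iff[OF partition_lam x y(1)] y v1_eq_parts_ge[OF assms] by simp
  then show "1 \<le> v1 lam s" using y by simp
  moreover have "v1 lam s \<le> parts_ge lam (usize s)" by (simp add: v1_eq_parts_ge[OF assms])
  ultimately have "usize s \<le> part lam (v1 lam s)"
    using le_parts_ge_iff[OF partition_lam x] by blast
  moreover have "part lam (v1 lam s) \<le> usize s"
    using part_mono[OF partition_lam y(1) \<open>y \<le> v1 lam s\<close>] y by simp
  ultimately show "part lam (v1 lam s) = usize s" by simp
  show "v1 lam s \<le> length lam"
    using parts_ge_le_length v1_eq_parts_ge[OF assms] by simp
qed

lemma v1_strict_mono:
  assumes "s < s'" "s' \<le> d"
  shows "v1 lam s < v1 lam s'"
proof (cases "s = 0")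
  case True
  have "v1 lam 0 = 0" by (simp add: v1_def)
  then show ?thesis using part_v1(1)[of s'] assms True by simp
next
  case False
  then have less: "usize s' < usize s" using usize_strict_antimono[of s s'] assms by simp
  then have "v1 lam s \<le> v1 lam s'"
    using parts_ge_antimono[of "usize s'" "usize s" lam] v1_eq_parts_ge[of s] v1_eq_parts_ge[of s']
      assms False by simp
  moreover have "v1 lam s \<noteq> v1 lam s'"
    using part_v1(3)[of s] part_v1(3)[of s'] assms False less by auto
  ultimately show ?thesis by simp
qed

lemma v1_ndist: "v1 lam d = length lam"
proof (cases "d = 0")
  case True
  then show ?thesis by (simp add: v1_def ndist_def)
next
  case False
  have "usize d \<le> p" if "p \<in> set lam" for p
    using that by (rule in_set_usizeE) (use usize_antimono in simp)
  then show ?thesis using False v1_eq_parts_ge[of d] by (simp add: parts_ge_def filter_True)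
qed

lemma part_v1_add1:
  assumes "s \<le> d"
  shows "part lam (v1 lam s + 1) = usize (s + 1)"
proof (cases "s = d")
  case True
  then show ?thesis by (simp add: v1_ndist part_eq_0 usize_def)
next
  case False
  then have "v1 lam s + 1 \<le> v1 lam (s + 1)" using v1_strict_mono[of s "s + 1"] assms by simp
  from part_mono[OF partition_lam _ this]
  have lower: "usize (s + 1) \<le> part lam (v1 lam s + 1)"
    using part_v1(3)[of "s + 1"] assms False by simp
  then have "0 < part lam (v1 lam s + 1)" using usize_pos[of "s + 1"] assms False by simp
  then have "part lam (v1 lam s + 1) \<in> set lam"
    using part_pos_iff[of lam] partition_lam part_in_set by (simp add: is_partition_def)
  then obtain k where k: "1 \<le> k" "k \<le> d" "part lam (v1 lam s + 1) = usize k"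
    by (rule in_set_usizeE)
  have "s < k"
  proof (rule ccontr)
    assume "\<not> s < k"
    then have "1 \<le> s" "usize s \<le> part lam (v1 lam s + 1)"
      using usize_antimono[of k s] k assms by auto
    then have "v1 lam s + 1 \<le> v1 lam s"
      using le_parts_ge_iff[OF partition_lam _ _, of "usize s" "v1 lam s + 1"] usize_pos[of s]
        v1_eq_parts_ge[of s] assms by simp
    then show False by simp
  qed
  then show ?thesis using lower k usize_antimono[of "s + 1" k] by simp
qed

lemma conj_part_eq_map: "conj_part lam = map (parts_ge lam) [1..<Suc (Max (insert 0 (set lam)))]"
  by (simp add: conj_part_def parts_ge_def)

lemma set_conj_part: "set (conj_part lam) = v1 lam ` {1..d}"
proof
  show "set (conj_part lam) \<subseteq> v1 lam ` {1..d}"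
  proof
    fix v assume "v \<in> set (conj_part lam)"
    then obtain x where x: "1 \<le> x" "x \<le> Max (insert 0 (set lam))" "v = parts_ge lam x"
      unfolding conj_part_eq_map by auto
    then have "Max (insert 0 (set lam)) \<in> set lam"
      using Max_in[of "insert 0 (set lam)"] by auto
    then obtain y where y: "1 \<le> y" "part lam y = Max (insert 0 (set lam))"
      using in_set_part_conv by metis
    then have "1 \<le> parts_ge lam x"
      using le_parts_ge_iff[OF partition_lam x(1) y(1)] x by simp
    then have "part lam (parts_ge lam x) \<in> set lam"
      using parts_ge_le_length part_in_set by blast
    then obtain s where s: "1 \<le> s" "s \<le> d" "part lam (parts_ge lam x) = usize s"
      by (rule in_set_usizeE)
    have "v = v1 lam s"
      using parts_ge_part_parts_ge[OF partition_lam x(1) \<open>1 \<le> parts_ge lam x\<close>] s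
        v1_eq_parts_ge x(3) by simp
    then show "v \<in> v1 lam ` {1..d}" using s by auto
  qed
next
  show "v1 lam ` {1..d} \<subseteq> set (conj_part lam)"
  proof
    fix v assume "v \<in> v1 lam ` {1..d}"
    then obtain s where s: "1 \<le> s" "s \<le> d" "v = v1 lam s" by auto
    have "1 \<le> usize s" "usize s \<le> Max (insert 0 (set lam))"
      using usize_pos[OF s(1,2)] usize_in_set[OF s(1,2)] by auto
    then show "v \<in> set (conj_part lam)"
      unfolding conj_part_eq_map using s v1_eq_parts_ge by (auto simp del: upt_Suc)
  qed
qed

lemma inj_on_v1: "inj_on (v1 lam) {1..d}"
  by (rule inj_onI) (metis v1_strict_mono atLeastAtMost_iff less_irrefl nat_neq_iff)

lemma usizes_conj_part: "usizes (conj_part lam) = rev (map (v1 lam) [1..<Suc d])"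
proof -
  have "sorted_wrt (<) (map (v1 lam) [1..<Suc d])"
    unfolding sorted_wrt_map by (rule sorted_wrt_mono_rel[OF _ sorted_wrt_upt]) (auto intro: v1_strict_mono)
  then have "sorted_list_of_set (v1 lam ` {1..d}) = map (v1 lam) [1..<Suc d]"
    using card_image[OF inj_on_v1] by (intro sorted_list_of_set_unique[THEN iffD1]) auto
  then show ?thesis by (simp add: usizes_def set_conj_part)
qed

lemma v1_conj_part:
  assumes "1 \<le> j" "j \<le> d"
  shows "v1 (conj_part lam) j = usize (d + 1 - j)"
proof -
  have "usizes (conj_part lam) ! (j - 1) = v1 lam (d + 1 - j)"
    unfolding usizes_conj_part using assms by (simp add: rev_nth Suc_diff_le del: upt_Suc)
  then have "v1 (conj_part lam) j = parts_ge (conj_part lam) (v1 lam (d + 1 - j))"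
    using assms by (simp add: v1_def parts_ge_def)
  also have "\<dots> = part lam (v1 lam (d + 1 - j))"
    using part_conj_part[of "v1 lam (d + 1 - j)" "conj_part lam"] part_v1(1)[of "d + 1 - j"] assms
    by (simp add: conj_part_conj_part[OF partition_lam])
  also have "\<dots> = usize (d + 1 - j)" using part_v1(3)[of "d + 1 - j"] assms by simp
  finally show ?thesis .
qed

lemma one_cell_ext_lam_plus:
  assumes "s \<le> d"
  shows "one_cell_ext lam (lam_plus lam s) (v1 lam s + 1)"
proof -
  have "v1 lam s + 1 = 1 \<or> part lam (v1 lam s + 1) < part lam (v1 lam s + 1 - 1)"
  proof (cases "s = 0")
    case False
    then show ?thesis
      using part_v1_add1[OF assms] part_v1(3)[of s] usize_strict_antimono[of s "s + 1"] assms by simp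
  qed (simp add: v1_def)
  then show ?thesis unfolding lam_plus_def by (intro one_cell_ext_add_cell[OF partition_lam]) simp_all
qed

lemma lam_plus_conj_part:
  assumes "s \<le> d"
  shows "lam_plus (conj_part lam) (d - s) = conj_part (lam_plus lam s)"
proof -
  interpret one_cell_ext lam "lam_plus lam s" "v1 lam s + 1"
    by (rule one_cell_ext_lam_plus[OF assms])
  have "v1 (conj_part lam) (d - s) = usize (s + 1)"
  proof (cases "s = d")
    case True
    then show ?thesis by (simp add: v1_def usize_def)
  qed (use v1_conj_part[of "d - s"] assms in simp)
  moreover have "conj_part (lam_plus lam s) = add_cell (conj_part lam) (usize (s + 1) + 1)"
    using conj_part_nu_eq_add_cell unfolding x0_eq part_v1_add1[OF assms] by simp
  ultimately show ?thesis by (simp add: lam_plus_def[of "conj_part lam"])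
qed

lemma one_cell_ext_lam_minus:
  assumes "1 \<le> r" "r \<le> d"
  shows "one_cell_ext (lam_minus lam r) lam (v1 lam r)"
proof -
  have "part lam (Suc (v1 lam r)) < part lam (v1 lam r)"
    using part_v1_add1[of r] part_v1(3)[OF assms] usize_strict_antimono[of r "r + 1"] assms by simp
  then show ?thesis
    using assms by (simp add: lam_minus_def one_cell_ext_remove_cell[OF partition_lam])
qed

lemma lam_minus_conj_part:
  assumes "1 \<le> r" "r \<le> d"
  shows "lam_minus (conj_part lam) (d + 1 - r) = conj_part (lam_minus lam r)"
proof -
  interpret one_cell_ext "lam_minus lam r" lam "v1 lam r"
    by (rule one_cell_ext_lam_minus[OF assms])
  have "x0 = usize r" using part_v1(3)[OF assms] by (simp add: x0_def)
  then have "conj_part (lam_minus lam r) = remove_cell (conj_part lam) (usize r)"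
    using conj_part_lam_eq_remove_cell by simp
  moreover have "v1 (conj_part lam) (d + 1 - r) = usize r"
    using v1_conj_part[of "d + 1 - r"] assms by simp
  ultimately show ?thesis using assms by (simp add: lam_minus_def[of "conj_part lam"])
qed

end

theorem lemma5p2:
  fixes lam :: "nat list" and r s d :: nat and q t :: real
  assumes "is_partition lam"
    and "d = ndist lam"
    and "r \<le> d" and "s \<le> d"
    and "0 < q" and "0 < t"
    and "\<forall>i j :: int. (i, j) \<noteq> (0, 0) \<longrightarrow> q powi i * t powi j \<noteq> 1"
  shows "prs r s lam t q = prs_col ((d + 1 - r) mod (d + 1)) (d - s) (conj_part lam) q t
       \<and> prsbar r s lam t q = prsbar_col ((d + 1 - r) mod (d + 1)) (d - s) (conj_part lam) q t"
proof -
  interpret partition_sizes lam by unfold_locales (rule assms(1))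
  have q: "q \<noteq> 0" and t: "t \<noteq> 0" using assms(5,6) by auto
  have plus: "one_cell_ext lam (lam_plus lam s) (v1 lam s + 1)"
    "lam_plus (conj_part lam) (d - s) = conj_part (lam_plus lam s)"
    using one_cell_ext_lam_plus lam_plus_conj_part assms(2,4) by simp_all
  show ?thesis
  proof (cases "r = 0")
    case True
    then show ?thesis
      using one_cell_ext.P0_conj_part[OF plus(1) q t] one_cell_ext.P0bar_conj_part[OF plus(1) q t]
      by (simp add: prs_def prsbar_def prs_col_def prsbar_col_def plus(2))
  next
    case False
    then have r: "(d + 1 - r) mod (d + 1) = d + 1 - r" "d + 1 - r \<noteq> 0" using assms(3) by auto
    have minus: "one_cell_ext (lam_minus lam r) lam (v1 lam r)"
      "lam_minus (conj_part lam) (d + 1 - r) = conj_part (lam_minus lam r)"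
      using one_cell_ext_lam_minus lam_minus_conj_part assms(2,3) False by simp_all
    show ?thesis
      unfolding prs_def prsbar_def prs_col_def prsbar_col_def r(1) plus(2) minus(2)
      using P1_conj_part[OF minus(1) plus(1) q t] P1bar_conj_part[OF minus(1) plus(1) q t] False r(2)
      by simp
  qed
qed

end
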